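(* Any $\omega$-recognizable preorder $\preceq$ on $\Sigma^\omega$ can be embedded into an $\omega$-recognizable total preorder $\preceq'$ (i.e., $\preceq\subseteq\preceq'$). Moreover, for all $x,y\in\Sigma^\omega$, if $x\bowtie y$ then $x\bowtie' y$, for each $\bowtie\in\{\preceq,\prec,\succeq,\succ,\sim\}$, where $\bowtie'$ denotes the corresponding relation derived from $\preceq'$.
   Context: A relation on $\Sigma^\omega$ is $\omega$-recognizable if it equals $\bigcup_{k=1}^{\ell}X_k\times Y_k$ with $X_k,Y_k$ $\omega$-regular. A preorder is reflexive and transitive; it is total if for all $x,y$, $x\preceq y$ or $y\preceq x$. From a preorder $\preceq$: $x\succeq y$ iff $y\preceq x$; $x\prec y$ iff $x\preceq y$ and $y\not\preceq x$; $x\succ y$ iff $y\prec x$; $x\sim y$ iff $x\preceq y$ and $y\preceq x$. *)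

theory Defs
  imports Main
begin

text \<open>Infinite words over a finite alphabet 'a (the type 'a plays the role of Sigma;
  Sigma^omega is the set UNIV of all functions nat => 'a).\<close>
type_synonym 'a oword = "nat \<Rightarrow> 'a"

definition buchi_accepts ::
  "nat set \<Rightarrow> nat set \<Rightarrow> (nat \<times> 'a \<times> nat) set \<Rightarrow> nat set \<Rightarrow> 'a oword \<Rightarrow> bool" where
  "buchi_accepts Q I Delta F w \<longleftrightarrow>
     (\<exists>r :: nat \<Rightarrow> nat. r 0 \<in> I \<and>
        (\<forall>i. r i \<in> Q \<and> (r i, w i, r (Suc i)) \<in> Delta) \<and>
        infinite {i. r i \<in> F})"

definition omega_regular :: "('a::finite) oword set \<Rightarrow> bool" where
  "omega_regular L \<longleftrightarrow>
     (\<exists>Q I Delta F. finite Q \<and> I \<subseteq> Q \<and> F \<subseteq> Q \<and> Delta \<subseteq> Q \<times> UNIV \<times> Q \<and>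
        L = {w. buchi_accepts Q I Delta F w})"

definition omega_recognizable :: "('a::finite) oword rel \<Rightarrow> bool" where
  "omega_recognizable R \<longleftrightarrow>
     (\<exists>(l::nat) X Y. (\<forall>k\<in>{1..l}. omega_regular (X k) \<and> omega_regular (Y k)) \<and>
        R = (\<Union>k\<in>{1..l}. X k \<times> Y k))"

definition pre_ge :: "'b rel \<Rightarrow> 'b \<Rightarrow> 'b \<Rightarrow> bool" where
  "pre_ge R x y \<longleftrightarrow> (y, x) \<in> R"

definition pre_less :: "'b rel \<Rightarrow> 'b \<Rightarrow> 'b \<Rightarrow> bool" where
  "pre_less R x y \<longleftrightarrow> (x, y) \<in> R \<and> (y, x) \<notin> R"

definition pre_greater :: "'b rel \<Rightarrow> 'b \<Rightarrow> 'b \<Rightarrow> bool" where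
  "pre_greater R x y \<longleftrightarrow> pre_less R y x"

definition pre_equiv :: "'b rel \<Rightarrow> 'b \<Rightarrow> 'b \<Rightarrow> bool" where
  "pre_equiv R x y \<longleftrightarrow> (x, y) \<in> R \<and> (y, x) \<in> R"

end

theory Submission
  imports Defs
begin

text \<open>
  Since \<open>R = \<Union>\<^sub>k X\<^sub>k \<times> Y\<^sub>k\<close>, the upper set \<open>R``{z}\<close> is the union of the \<open>Y\<^sub>k\<close> with
  \<open>z \<in> X\<^sub>k\<close>, so there are only finitely many upper sets, i.e. finitely many
  \<open>\<sim>\<close>-classes. Ranking \<open>x\<close> by the number of classes strictly below it gives a map
  \<open>h\<close> into \<open>\<nat>\<close> that is monotone and strictly monotone on \<open>\<prec>\<close>; then
  \<open>x \<preceq>' y \<longleftrightarrow> h x \<le> h y\<close> is the required total preorder. It is recognizable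
  because every transitive relation containing a reflexive \<open>\<Union>\<^sub>k X\<^sub>k \<times> Y\<^sub>k\<close> is the
  union of those rectangles \<open>X\<^sub>i \<times> Y\<^sub>j\<close> it contains.
\<close>

lemma omega_recognizableI:
  assumes "finite K" and "\<forall>k\<in>K. omega_regular (X k) \<and> omega_regular (Y k)"
    and "R = (\<Union>k\<in>K. X k \<times> Y k)"
  shows "omega_recognizable R"
proof -
  obtain g where g: "bij_betw g {1..card K} K"
    using ex_bij_betw_nat_finite_1[OF \<open>finite K\<close>] by blast
  have "(\<Union>i\<in>{1..card K}. X (g i) \<times> Y (g i)) = (\<Union>k\<in>g ` {1..card K}. X k \<times> Y k)"
    by simp
  also have "g ` {1..card K} = K"
    using g by (rule bij_betw_imp_surj_on)
  finally have "R = (\<Union>i\<in>{1..card K}. X (g i) \<times> Y (g i))"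
    using assms(3) by simp
  moreover have "\<forall>i\<in>{1..card K}. omega_regular (X (g i)) \<and> omega_regular (Y (g i))"
    using assms(2) bij_betwE[OF g] by blast
  ultimately show ?thesis
    unfolding omega_recognizable_def
    by (intro exI[of _ "card K"] exI[of _ "X \<circ> g"] exI[of _ "Y \<circ> g"]) simp
qed

lemma trans_superset_eq_Union_rectangles:
  assumes R: "R = (\<Union>k\<in>K. X k \<times> Y k)" and "refl R" and "trans R'" and "R \<subseteq> R'"
  shows "R' = (\<Union>(i, j)\<in>{(i, j) \<in> K \<times> K. X i \<times> Y j \<subseteq> R'}. X i \<times> Y j)"
proof (intro equalityI subrelI)
  fix x y assume xy: "(x, y) \<in> R'"
  obtain i where i: "i \<in> K" "x \<in> X i" "x \<in> Y i"
    using refl_onD[OF \<open>refl R\<close>, of x] R by blast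
  obtain j where j: "j \<in> K" "y \<in> X j" "y \<in> Y j"
    using refl_onD[OF \<open>refl R\<close>, of y] R by blast
  have "X i \<times> Y j \<subseteq> R'"
  proof (intro subrelI)
    fix a b assume "(a, b) \<in> X i \<times> Y j"
    then have "(a, x) \<in> R'" and "(y, b) \<in> R'"
      using i j R \<open>R \<subseteq> R'\<close> by blast+
    with xy show "(a, b) \<in> R'"
      using \<open>trans R'\<close> by (meson transD)
  qed
  with i j show "(x, y) \<in> (\<Union>(i, j)\<in>{(i, j) \<in> K \<times> K. X i \<times> Y j \<subseteq> R'}. X i \<times> Y j)"
    by blast
qed blast

lemma omega_recognizable_trans_superset:
  assumes "omega_recognizable R" and "refl R" and "trans R'" and "R \<subseteq> R'"
  shows "omega_recognizable R'"
proof -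
  obtain l :: nat and X Y where reg: "\<forall>k\<in>{1..l}. omega_regular (X k) \<and> omega_regular (Y k)"
    and R: "R = (\<Union>k\<in>{1..l}. X k \<times> Y k)"
    using assms(1) unfolding omega_recognizable_def by blast
  define T where "T = {(i, j) \<in> {1..l} \<times> {1..l}. X i \<times> Y j \<subseteq> R'}"
  have "R' = (\<Union>p\<in>T. X (fst p) \<times> Y (snd p))"
    using trans_superset_eq_Union_rectangles[OF R assms(2-4)] by (simp add: T_def split_def)
  moreover have "finite T"
    by (auto simp: T_def intro: finite_subset[of _ "{1..l} \<times> {1..l}"])
  moreover have "\<forall>p\<in>T. omega_regular (X (fst p)) \<and> omega_regular (Y (snd p))"
    using reg by (auto simp: T_def)
  ultimately show ?thesis
    by (rule omega_recognizableI[rotated 2])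
qed

lemma finite_range_Image_Union_rectangles:
  assumes "finite K" and "R = (\<Union>k\<in>K. X k \<times> Y k)"
  shows "finite (range (\<lambda>z. R `` {z}))"
proof (rule finite_subset)
  show "range (\<lambda>z. R `` {z}) \<subseteq> (\<lambda>L. \<Union>k\<in>L. Y k) ` Pow K"
  proof
    fix A assume "A \<in> range (\<lambda>z. R `` {z})"
    then obtain z where "A = R `` {z}" by blast
    then have "A = (\<Union>k\<in>{k \<in> K. z \<in> X k}. Y k)"
      using assms(2) by auto
    then show "A \<in> (\<lambda>L. \<Union>k\<in>L. Y k) ` Pow K" by blast
  qed
qed (use \<open>finite K\<close> in simp)

lemma pre_less_le_trans:
  assumes "trans R" and "pre_less R x y" and "(y, z) \<in> R"
  shows "pre_less R x z"
  using assms transD[OF assms(1)] unfolding pre_less_def by blast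

definition preorder_rank :: "'b rel \<Rightarrow> 'b \<Rightarrow> nat" where
  "preorder_rank R x = card ((\<lambda>z. R `` {z}) ` {z. pre_less R z x})"

lemma preorder_rank_mono:
  assumes "trans R" and "finite (range (\<lambda>z. R `` {z}))" and "(x, y) \<in> R"
  shows "preorder_rank R x \<le> preorder_rank R y"
proof -
  let ?up = "\<lambda>z. R `` {z}"
  have "?up ` {z. pre_less R z x} \<subseteq> ?up ` {z. pre_less R z y}"
    using pre_less_le_trans[OF assms(1) _ assms(3)] by blast
  moreover have "finite (?up ` {z. pre_less R z y})"
    using assms(2) by (rule finite_subset[rotated]) blast
  ultimately show ?thesis
    unfolding preorder_rank_def by (rule card_mono[rotated])
qed

lemma preorder_rank_strict_mono:
  assumes "refl R" and "trans R" and "finite (range (\<lambda>z. R `` {z}))" and "pre_less R x y"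
  shows "preorder_rank R x < preorder_rank R y"
proof -
  let ?up = "\<lambda>z. R `` {z}"
  have "(x, y) \<in> R"
    using assms(4) unfolding pre_less_def by blast
  then have "?up ` {z. pre_less R z x} \<subseteq> ?up ` {z. pre_less R z y}"
    using pre_less_le_trans[OF assms(2)] by blast
  moreover have "?up x \<in> ?up ` {z. pre_less R z y}"
    using assms(4) by blast
  moreover have "?up x \<notin> ?up ` {z. pre_less R z x}"
  proof
    assume "?up x \<in> ?up ` {z. pre_less R z x}"
    then obtain z where "pre_less R z x" and "?up x = ?up z" by blast
    moreover have "z \<in> ?up z" using refl_onD[OF assms(1)] by blast
    ultimately show False unfolding pre_less_def by blast
  qed
  ultimately show ?thesis
    unfolding preorder_rank_def
    by (intro psubset_card_mono finite_subset[OF _ assms(3)]) auto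
qed

theorem proposition12:
  fixes R :: "('a::finite) oword rel"
  assumes "preorder_on UNIV R"
    and "omega_recognizable R"
  shows "\<exists>R' :: 'a oword rel.
           preorder_on UNIV R' \<and> total_on UNIV R' \<and> omega_recognizable R' \<and> R \<subseteq> R' \<and>
           (\<forall>x y. ((x, y) \<in> R \<longrightarrow> (x, y) \<in> R') \<and>
                  (pre_less R x y \<longrightarrow> pre_less R' x y) \<and>
                  (pre_ge R x y \<longrightarrow> pre_ge R' x y) \<and>
                  (pre_greater R x y \<longrightarrow> pre_greater R' x y) \<and>
                  (pre_equiv R x y \<longrightarrow> pre_equiv R' x y))"
proof -
  have "refl R" and "trans R"
    using assms(1) unfolding preorder_on_def by auto
  obtain l :: nat and X Y where "R = (\<Union>k\<in>{1..l}. X k \<times> Y k)"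
    using assms(2) unfolding omega_recognizable_def by blast
  with finite_atLeastAtMost have fin: "finite (range (\<lambda>z. R `` {z}))"
    by (rule finite_range_Image_Union_rectangles)
  define R' where "R' = {(x, y). preorder_rank R x \<le> preorder_rank R y}"
  have "R \<subseteq> R'"
    using preorder_rank_mono[OF \<open>trans R\<close> fin] by (auto simp: R'_def)
  have strict: "pre_less R x y \<Longrightarrow> pre_less R' x y" for x y
    using preorder_rank_strict_mono[OF \<open>refl R\<close> \<open>trans R\<close> fin]
    by (fastforce simp: R'_def pre_less_def)
  have "trans R'"
    by (auto simp: R'_def trans_def)
  then have "omega_recognizable R'"
    using omega_recognizable_trans_superset[OF assms(2) \<open>refl R\<close> _ \<open>R \<subseteq> R'\<close>] by blast
  moreover have "preorder_on UNIV R'" and "total_on UNIV R'"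
    using \<open>trans R'\<close> by (auto simp: preorder_on_def refl_on_def total_on_def R'_def)
  ultimately show ?thesis
    using \<open>R \<subseteq> R'\<close> strict
    by (auto simp: pre_ge_def pre_greater_def pre_equiv_def)
qed

end
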